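(* Let $\tilde F=[\tilde{\mathbf{f}}_1,\dots,\tilde{\mathbf{f}}_K]\in\mathbb{R}^{n\times K}$, $\eta>0$, and $B=(b_{jl}):=(\tilde F^\top\tilde F+\eta I)^{-1}$. Then the $j$-th column of $\tilde FB$ is $$[\tilde FB]_j=b_{jj}\tilde{\mathbf{f}}_j+\sum_{l\ne j}b_{jl}\tilde{\mathbf{f}}_l,$$ and for every $l\ne j$, $$\mathrm{sign}(b_{jl})=-\mathrm{sign}\big(\tilde{\mathbf{f}}_j^\top P_{\eta,-jl}\tilde{\mathbf{f}}_l\big),$$ where $P_{\eta,-jl}:=I-\tilde F_{-jl}(\tilde F_{-jl}^\top\tilde F_{-jl}+\eta I)^{-1}\tilde F_{-jl}^\top$ and $\tilde F_{-jl}$ is $\tilde F$ with the $j$-th and $l$-th columns removed.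
   Context: In the paper, $\tilde F=(I-\mathbf{1}\mathbf{1}^\top/n)\sigma(XW)$ is the centered hidden-layer activation matrix of a 2-layer network with $K$ hidden neurons and $\eta$ is the weight decay. *)

theory Defs
  imports "Jordan_Normal_Form.Matrix"
begin

definition mat_inv :: "real mat \<Rightarrow> real mat" where
  "mat_inv A = (THE B. B \<in> carrier_mat (dim_row A) (dim_row A) \<and>
                      A * B = 1\<^sub>m (dim_row A) \<and> B * A = 1\<^sub>m (dim_row A))"

definition del_two_cols :: "nat \<Rightarrow> nat \<Rightarrow> real mat \<Rightarrow> real mat" where
  "del_two_cols j l F =
     mat_of_cols (dim_row F) [col F i. i \<leftarrow> [0..<dim_col F], i \<noteq> j, i \<noteq> l]"

definition P_proj :: "real \<Rightarrow> nat \<Rightarrow> nat \<Rightarrow> real mat \<Rightarrow> real mat" where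
  "P_proj \<eta> j l F =
     (let G = del_two_cols j l F in
      1\<^sub>m (dim_row F) - G * mat_inv (transpose_mat G * G + \<eta> \<cdot>\<^sub>m 1\<^sub>m (dim_col G)) * transpose_mat G)"

end

theory Submission
  imports Defs "Jordan_Normal_Form.Determinant"
begin

(* Let b be the l-th column of B, so that (F^T F + eta I) b = e_l. The equations of this system
   with index outside {j, l} are the normal equations of a ridge regression on F_{-jl}; solving
   them gives F b = P (b_j f_j + b_l f_l) with P = P_{eta,-jl}. Equation j then reads
   b_j (f_j^T P f_j + eta) + b_l f_j^T P f_l = 0, where f_j^T P f_j >= 0 and
   b_l = b^T (F^T F + eta I) b > 0, so b_jl has the sign opposite to f_j^T P f_l.
   The column formula only uses the symmetry of B. *)

lemma scalar_prod_self_nonneg: "0 \<le> (v::real vec) \<bullet> v"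
  using conjugate_square_ge_0_vec[of v] by simp

lemma scalar_prod_self_pos:
  assumes "(v::real vec) \<in> carrier_vec k" and "v \<noteq> 0\<^sub>v k"
  shows "0 < v \<bullet> v"
  using conjugate_square_greater_0_vec[OF assms(1)] assms(2) by simp

lemma mat_inv_eqI:
  assumes A: "A \<in> carrier_mat k k" and B: "B \<in> carrier_mat k k"
    and AB: "A * B = 1\<^sub>m k" and BA: "B * A = 1\<^sub>m k"
  shows "mat_inv A = B"
  unfolding mat_inv_def
proof (rule the_equality)
  fix B' assume "B' \<in> carrier_mat (dim_row A) (dim_row A) \<and>
    A * B' = 1\<^sub>m (dim_row A) \<and> B' * A = 1\<^sub>m (dim_row A)"
  then have B': "B' \<in> carrier_mat k k" "B' * A = 1\<^sub>m k" using A by auto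
  have "B' = B' * (A * B)" using AB B' by simp
  also have "\<dots> = (B' * A) * B" using assoc_mult_mat[OF B'(1) A B] by simp
  also have "\<dots> = B" using B' B by simp
  finally show "B' = B" .
qed (use A B AB BA in auto)

lemma mat_inv_pos_def:
  fixes A :: "real mat"
  assumes A: "A \<in> carrier_mat k k"
    and pos: "\<And>v. v \<in> carrier_vec k \<Longrightarrow> v \<noteq> 0\<^sub>v k \<Longrightarrow> 0 < v \<bullet> (A *\<^sub>v v)"
  shows "mat_inv A \<in> carrier_mat k k" "A * mat_inv A = 1\<^sub>m k" "mat_inv A * A = 1\<^sub>m k"
proof -
  have "det A \<noteq> 0"
  proof
    assume "det A = 0"
    then obtain v where "v \<in> carrier_vec k" "v \<noteq> 0\<^sub>v k" "A *\<^sub>v v = 0\<^sub>v k"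
      using det_0_iff_vec_prod_zero_field[OF A] by auto
    then show False using pos[of v] by simp
  qed
  then obtain B where B: "B \<in> carrier_mat k k" "B * A = 1\<^sub>m k"
    using det_non_zero_imp_unit[OF A, of "()"] unfolding Units_def ring_mat_def by auto
  moreover have "A * B = 1\<^sub>m k" using mat_mult_left_right_inverse[OF B(1) A B(2)] .
  ultimately have "mat_inv A = B" using mat_inv_eqI[OF A] by blast
  with B \<open>A * B = 1\<^sub>m k\<close>
  show "mat_inv A \<in> carrier_mat k k" "A * mat_inv A = 1\<^sub>m k" "mat_inv A * A = 1\<^sub>m k" by auto
qed

lemma transpose_mat_inv_symmetric:
  assumes A: "A \<in> carrier_mat k k" and sym: "transpose_mat A = A"
    and inv: "mat_inv A \<in> carrier_mat k k" "A * mat_inv A = 1\<^sub>m k" "mat_inv A * A = 1\<^sub>m k"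
  shows "transpose_mat (mat_inv A) = mat_inv A"
proof -
  have "A * transpose_mat (mat_inv A) = 1\<^sub>m k"
    using arg_cong[OF inv(3), of transpose_mat] transpose_mult[OF inv(1) A] sym by simp
  moreover have "transpose_mat (mat_inv A) * A = 1\<^sub>m k"
    using arg_cong[OF inv(2), of transpose_mat] transpose_mult[OF A inv(1)] sym by simp
  ultimately show ?thesis using mat_inv_eqI[OF A] inv(1) by (metis transpose_carrier_mat)
qed

abbreviation reg_gram :: "real \<Rightarrow> nat \<Rightarrow> real mat \<Rightarrow> real mat" where
  "reg_gram \<eta> k F \<equiv> transpose_mat F * F + \<eta> \<cdot>\<^sub>m 1\<^sub>m k"

lemma reg_gram_mult_vec:
  assumes F: "F \<in> carrier_mat n k" and v: "v \<in> carrier_vec k"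
  shows "reg_gram \<eta> k F *\<^sub>v v = transpose_mat F *\<^sub>v (F *\<^sub>v v) + \<eta> \<cdot>\<^sub>v v"
  using F v by (auto simp: add_mult_distrib_mat_vec[of _ k k] assoc_mult_mat_vec[of _ k n _ k])

lemma index_reg_gram_mult_vec:
  assumes "F \<in> carrier_mat n k" and "v \<in> carrier_vec k" and "i < k"
  shows "(reg_gram \<eta> k F *\<^sub>v v) $ i = col F i \<bullet> (F *\<^sub>v v) + \<eta> * v $ i"
  using assms by (simp add: reg_gram_mult_vec)

lemma scalar_prod_reg_gram_mult_vec:
  assumes F: "F \<in> carrier_mat n k" and v: "v \<in> carrier_vec k"
  shows "v \<bullet> (reg_gram \<eta> k F *\<^sub>v v) = (F *\<^sub>v v) \<bullet> (F *\<^sub>v v) + \<eta> * (v \<bullet> v)"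
proof -
  have "v \<bullet> (transpose_mat F *\<^sub>v (F *\<^sub>v v)) = (F *\<^sub>v v) \<bullet> (F *\<^sub>v v)"
    using transpose_vec_mult_scalar[OF F v, of "F *\<^sub>v v"] comm_scalar_prod[OF v] F v by simp
  then show ?thesis
    using F v by (simp add: reg_gram_mult_vec scalar_prod_add_distrib[OF v])
qed

lemma reg_gram_pos_def:
  assumes F: "F \<in> carrier_mat n k" and eta: "\<eta> > 0"
    and v: "v \<in> carrier_vec k" and "v \<noteq> 0\<^sub>v k"
  shows "0 < v \<bullet> (reg_gram \<eta> k F *\<^sub>v v)"
  unfolding scalar_prod_reg_gram_mult_vec[OF F v]
  using scalar_prod_self_nonneg[of "F *\<^sub>v v"] scalar_prod_self_pos[OF assms(3,4)] eta
  by (simp add: add_nonneg_pos)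

lemma mat_inv_reg_gram:
  assumes F: "F \<in> carrier_mat n k" and eta: "\<eta> > 0"
  defines "B \<equiv> mat_inv (reg_gram \<eta> k F)"
  shows "B \<in> carrier_mat k k" "reg_gram \<eta> k F * B = 1\<^sub>m k" "B * reg_gram \<eta> k F = 1\<^sub>m k"
    and "transpose_mat B = B"
proof -
  have A: "reg_gram \<eta> k F \<in> carrier_mat k k" using F by simp
  show inv: "B \<in> carrier_mat k k" "reg_gram \<eta> k F * B = 1\<^sub>m k" "B * reg_gram \<eta> k F = 1\<^sub>m k"
    unfolding B_def using mat_inv_pos_def[OF A reg_gram_pos_def[OF F eta]] by auto
  have "transpose_mat (reg_gram \<eta> k F) = reg_gram \<eta> k F"
    using F by (intro eq_matI) (auto simp: comm_scalar_prod[of _ n])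
  from transpose_mat_inv_symmetric[OF A this inv[unfolded B_def]]
  show "transpose_mat B = B" unfolding B_def .
qed

definition reg_proj :: "real \<Rightarrow> real mat \<Rightarrow> real mat" where
  "reg_proj \<eta> G = 1\<^sub>m (dim_row G) - G * mat_inv (reg_gram \<eta> (dim_col G) G) * transpose_mat G"

lemma P_proj_eq_reg_proj: "P_proj \<eta> j l F = reg_proj \<eta> (del_two_cols j l F)"
  unfolding P_proj_def reg_proj_def Let_def del_two_cols_def by simp

lemma mult_mat_vec_uminus:
  assumes "(A :: 'a :: ring mat) \<in> carrier_mat nr nc" and "v \<in> carrier_vec nc"
  shows "A *\<^sub>v (- v) = - (A *\<^sub>v v)"
  using assms by (intro eq_vecI) auto

lemma reg_proj_mult_vec:
  assumes G: "G \<in> carrier_mat n m" and eta: "\<eta> > 0"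
    and u: "u \<in> carrier_vec n" and y: "y \<in> carrier_vec m"
    and normal_eq: "reg_gram \<eta> m G *\<^sub>v y = - (transpose_mat G *\<^sub>v u)"
  shows "reg_proj \<eta> G *\<^sub>v u = u + G *\<^sub>v y"
proof -
  define M where "M = mat_inv (reg_gram \<eta> m G)"
  note M = mat_inv_reg_gram[OF G eta, folded M_def]
  have Gu: "transpose_mat G *\<^sub>v u \<in> carrier_vec m" using G u by simp
  have "y = M *\<^sub>v (reg_gram \<eta> m G *\<^sub>v y)"
    using assoc_mult_mat_vec[OF M(1) _ y, of "reg_gram \<eta> m G"] M(3) G y by simp
  also have "\<dots> = - (M *\<^sub>v (transpose_mat G *\<^sub>v u))"
    unfolding normal_eq using mult_mat_vec_uminus[OF M(1) Gu] .
  finally have GMGu: "G *\<^sub>v (M *\<^sub>v (transpose_mat G *\<^sub>v u)) = - (G *\<^sub>v y)"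
    using G M(1) Gu by (simp add: mult_mat_vec_uminus[OF G])
  have "reg_proj \<eta> G = 1\<^sub>m n - G * M * transpose_mat G"
    unfolding reg_proj_def M_def using G by simp
  then have "reg_proj \<eta> G *\<^sub>v u = u - (G * M * transpose_mat G) *\<^sub>v u"
    using G M(1) u by (simp add: minus_mult_distrib_mat_vec[of _ n n])
  also have "(G * M * transpose_mat G) *\<^sub>v u = - (G *\<^sub>v y)"
    using G M(1) u assoc_mult_mat_vec[of "G * M" n m "transpose_mat G" n u]
      assoc_mult_mat_vec[of G n m M m "transpose_mat G *\<^sub>v u"] GMGu by simp
  finally show ?thesis using G u y by (auto simp: minus_add_uminus_vec[of _ n])
qed

lemma reg_proj_quadratic_nonneg:
  assumes G: "G \<in> carrier_mat n m" and eta: "\<eta> > 0" and f: "f \<in> carrier_vec n"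
  shows "0 \<le> f \<bullet> (reg_proj \<eta> G *\<^sub>v f)"
proof -
  define M where "M = mat_inv (reg_gram \<eta> m G)"
  note M = mat_inv_reg_gram[OF G eta, folded M_def]
  define y where "y = - (M *\<^sub>v (transpose_mat G *\<^sub>v f))"
  have y: "y \<in> carrier_vec m" unfolding y_def using G M(1) f by simp
  have Gf: "transpose_mat G *\<^sub>v f \<in> carrier_vec m" using G f by simp
  have normal_eq: "reg_gram \<eta> m G *\<^sub>v y = - (transpose_mat G *\<^sub>v f)"
    unfolding y_def using G M(1,2) Gf
    by (simp add: mult_mat_vec_uminus[of _ m m] assoc_mult_mat_vec[symmetric, of _ m m M m])
  define z where "z = G *\<^sub>v y"
  define r where "r = f + z"
  have z: "z \<in> carrier_vec n" unfolding z_def using G y by simp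
  have "z \<bullet> f = y \<bullet> (transpose_mat G *\<^sub>v f)"
    using transpose_vec_mult_scalar[OF G y f] comm_scalar_prod[OF Gf y] comm_scalar_prod[OF z f]
    unfolding z_def by simp
  also have "\<dots> = - (y \<bullet> (reg_gram \<eta> m G *\<^sub>v y))"
    unfolding normal_eq using G y by (subst scalar_prod_uminus_right) auto
  also have "\<dots> = - (z \<bullet> z + \<eta> * (y \<bullet> y))"
    unfolding scalar_prod_reg_gram_mult_vec[OF G y] z_def ..
  finally have "z \<bullet> r = - \<eta> * (y \<bullet> y)"
    unfolding r_def using z f by (simp add: scalar_prod_add_distrib[of _ n])
  moreover have "f \<bullet> r = r \<bullet> r - z \<bullet> r"
    unfolding r_def using z f
    by (simp add: add_scalar_prod_distrib[of _ n] scalar_prod_add_distrib[of _ n])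
  moreover have "reg_proj \<eta> G *\<^sub>v f = r"
    unfolding r_def z_def using reg_proj_mult_vec[OF G eta f y normal_eq] .
  ultimately show ?thesis
    using scalar_prod_self_nonneg[of r] scalar_prod_self_nonneg[of y] eta by simp
qed

definition remaining_cols :: "nat \<Rightarrow> nat \<Rightarrow> nat \<Rightarrow> nat list" where
  "remaining_cols j l k = filter (\<lambda>i. i \<noteq> j \<and> i \<noteq> l) [0..<k]"

lemma set_remaining_cols: "set (remaining_cols j l k) = {0..<k} - {j, l}"
  unfolding remaining_cols_def by auto

lemma distinct_remaining_cols: "distinct (remaining_cols j l k)"
  unfolding remaining_cols_def by simp

lemma del_two_cols_eq:
  "del_two_cols j l F = mat_of_cols (dim_row F) (map (col F) (remaining_cols j l (dim_col F)))"
proof -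
  have "[col F i. i \<leftarrow> xs, i \<noteq> j, i \<noteq> l] = map (col F) (filter (\<lambda>i. i \<noteq> j \<and> i \<noteq> l) xs)" for xs
    by (induction xs) auto
  then show ?thesis unfolding del_two_cols_def remaining_cols_def by simp
qed

lemma
  fixes j l :: nat
  assumes F: "F \<in> carrier_mat n k"
  defines "m \<equiv> length (remaining_cols j l k)"
  shows del_two_cols_carrier: "del_two_cols j l F \<in> carrier_mat n m"
    and col_del_two_cols: "s < m \<Longrightarrow> col (del_two_cols j l F) s = col F (remaining_cols j l k ! s)"
    and index_del_two_cols:
      "r < n \<Longrightarrow> s < m \<Longrightarrow> del_two_cols j l F $$ (r, s) = F $$ (r, remaining_cols j l k ! s)"
  unfolding del_two_cols_eq m_def using F nth_mem[of _ "remaining_cols j l k"]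
  by (auto simp: set_remaining_cols mat_of_cols_index)

lemma mult_mat_vec_del_two_cols:
  assumes F: "F \<in> carrier_mat n k" and b: "b \<in> carrier_vec k"
    and j: "j < k" and l: "l < k" and "j \<noteq> l"
  defines "cs \<equiv> remaining_cols j l k"
  shows "F *\<^sub>v b = b $ j \<cdot>\<^sub>v col F j + b $ l \<cdot>\<^sub>v col F l
           + del_two_cols j l F *\<^sub>v vec (length cs) (\<lambda>s. b $ (cs ! s))"
    (is "_ = ?u + ?G *\<^sub>v ?y")
proof (rule eq_vecI)
  have G: "?G \<in> carrier_mat n (length cs)" unfolding cs_def using del_two_cols_carrier[OF F] .
  fix r assume "r < dim_vec (?u + ?G *\<^sub>v ?y)"
  then have r: "r < n" using G by simp
  have "(F *\<^sub>v b) $ r = (\<Sum>i\<in>{0..<k}. F $$ (r, i) * b $ i)"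
    using F r b by (simp add: scalar_prod_def)
  also have "\<dots> = (\<Sum>i\<in>{j, l}. F $$ (r, i) * b $ i) + (\<Sum>i\<in>set cs. F $$ (r, i) * b $ i)"
    unfolding cs_def set_remaining_cols using j l by (subst sum.subset_diff[of "{j, l}"]) auto
  also have "(\<Sum>i\<in>set cs. F $$ (r, i) * b $ i) = (\<Sum>s\<in>{0..<length cs}. F $$ (r, cs ! s) * b $ (cs ! s))"
    using sum_list_distinct_conv_sum_set[OF distinct_remaining_cols[of j l k], of "\<lambda>i. F $$ (r, i) * b $ i"]
      sum_list_sum_nth[of "map (\<lambda>i. F $$ (r, i) * b $ i) cs"]
    unfolding cs_def by simp
  also have "\<dots> = (?G *\<^sub>v ?y) $ r"
    using G r index_del_two_cols[OF F, of r _ j l, folded cs_def]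
    by (auto simp: scalar_prod_def intro!: sum.cong)
  finally show "(F *\<^sub>v b) $ r = (?u + ?G *\<^sub>v ?y) $ r"
    using r F G j l \<open>j \<noteq> l\<close> by simp
qed (use F del_two_cols_carrier[OF F, of j l] in simp)

lemma mult_mat_vec_eq_P_proj:
  assumes F: "F \<in> carrier_mat n k" and eta: "\<eta> > 0"
    and j: "j < k" and l: "l < k" and "j \<noteq> l" and b: "b \<in> carrier_vec k"
    and normal_eq: "\<And>i. i < k \<Longrightarrow> i \<noteq> j \<Longrightarrow> i \<noteq> l \<Longrightarrow> (reg_gram \<eta> k F *\<^sub>v b) $ i = 0"
  shows "F *\<^sub>v b = P_proj \<eta> j l F *\<^sub>v (b $ j \<cdot>\<^sub>v col F j + b $ l \<cdot>\<^sub>v col F l)"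
proof -
  define cs where "cs = remaining_cols j l k"
  define m where "m = length cs"
  define G where "G = del_two_cols j l F"
  define y where "y = vec m (\<lambda>s. b $ (cs ! s))"
  define u where "u = b $ j \<cdot>\<^sub>v col F j + b $ l \<cdot>\<^sub>v col F l"
  have G: "G \<in> carrier_mat n m" unfolding G_def m_def cs_def by (rule del_two_cols_carrier[OF F])
  have u: "u \<in> carrier_vec n" unfolding u_def using F j l by simp
  have y: "y \<in> carrier_vec m" unfolding y_def by simp
  have Fb: "F *\<^sub>v b = u + G *\<^sub>v y"
    unfolding u_def G_def y_def m_def cs_def using mult_mat_vec_del_two_cols[OF F b j l \<open>j \<noteq> l\<close>] .
  have "reg_gram \<eta> m G *\<^sub>v y = - (transpose_mat G *\<^sub>v u)"
  proof (rule eq_vecI)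
    fix s assume "s < dim_vec (- (transpose_mat G *\<^sub>v u))"
    then have s: "s < m" using G by simp
    define i where "i = cs ! s"
    have i: "i < k" "i \<noteq> j" "i \<noteq> l"
      using nth_mem[OF s[unfolded m_def]] set_remaining_cols unfolding i_def cs_def by auto
    have colG: "col G s = col F i"
      unfolding G_def i_def cs_def using col_del_two_cols[OF F] s unfolding m_def cs_def .
    have "(reg_gram \<eta> m G *\<^sub>v y) $ s = col F i \<bullet> (G *\<^sub>v y) + \<eta> * b $ i"
      using index_reg_gram_mult_vec[OF G y s] colG s unfolding y_def i_def by simp
    also have "\<dots> = (reg_gram \<eta> k F *\<^sub>v b) $ i - col F i \<bullet> u"
      unfolding index_reg_gram_mult_vec[OF F b i(1)] Fb
      using scalar_prod_add_distrib[OF _ u, of "col F i" "G *\<^sub>v y"] F i(1) G y by simp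
    also have "\<dots> = - (transpose_mat G *\<^sub>v u) $ s"
      using normal_eq[OF i] colG s G u by simp
    finally show "(reg_gram \<eta> m G *\<^sub>v y) $ s = (- (transpose_mat G *\<^sub>v u)) $ s"
      using s G by simp
  qed (use G in simp)
  from reg_proj_mult_vec[OF G eta u y this]
  show ?thesis unfolding P_proj_eq_reg_proj Fb u_def G_def by (rule sym)
qed

lemma sgn_mat_inv_reg_gram_off_diag:
  assumes F: "F \<in> carrier_mat n k" and eta: "\<eta> > 0"
    and j: "j < k" and l: "l < k" and "j \<noteq> l"
  shows "sgn (mat_inv (reg_gram \<eta> k F) $$ (j, l)) = - sgn (col F j \<bullet> (P_proj \<eta> j l F *\<^sub>v col F l))"
proof -
  define B where "B = mat_inv (reg_gram \<eta> k F)"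
  note B = mat_inv_reg_gram[OF F eta, folded B_def]
  define b where "b = col B l"
  define P where "P = P_proj \<eta> j l F"
  define p where "p = col F j \<bullet> (P *\<^sub>v col F j)"
  define q where "q = col F j \<bullet> (P *\<^sub>v col F l)"
  have b: "b \<in> carrier_vec k" unfolding b_def carrier_vec_def using B(1) by simp
  have fj: "col F j \<in> carrier_vec n" and fl: "col F l \<in> carrier_vec n" using F j l by auto
  have P: "P \<in> carrier_mat n n"
    unfolding P_def P_proj_eq_reg_proj reg_proj_def
    using del_two_cols_carrier[OF F, of j l] mat_inv_reg_gram(1)[OF del_two_cols_carrier[OF F, of j l] eta]
    by (intro minus_carrier_mat mult_carrier_mat) auto
  have "reg_gram \<eta> k F *\<^sub>v b = col (reg_gram \<eta> k F * B) l"
    unfolding b_def using col_mult2[of "reg_gram \<eta> k F" k k B k l] B(1) F l by simp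
  also have "\<dots> = unit_vec k l" using B(2) l by simp
  finally have Ab: "reg_gram \<eta> k F *\<^sub>v b = unit_vec k l" .
  have "b \<noteq> 0\<^sub>v k" using Ab l F by (auto dest: arg_cong[of _ _ "\<lambda>v. v $ l"])
  then have "0 < b \<bullet> (reg_gram \<eta> k F *\<^sub>v b)" by (rule reg_gram_pos_def[OF F eta b])
  then have bl: "0 < b $ l" unfolding Ab using b l by simp
  have p: "0 \<le> p"
    unfolding p_def P_def P_proj_eq_reg_proj
    using reg_proj_quadratic_nonneg[OF del_two_cols_carrier[OF F] eta fj] .
  have "F *\<^sub>v b = P *\<^sub>v (b $ j \<cdot>\<^sub>v col F j + b $ l \<cdot>\<^sub>v col F l)"
    unfolding P_def using Ab l by (intro mult_mat_vec_eq_P_proj[OF F eta j l \<open>j \<noteq> l\<close> b]) simp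
  also have "\<dots> = b $ j \<cdot>\<^sub>v (P *\<^sub>v col F j) + b $ l \<cdot>\<^sub>v (P *\<^sub>v col F l)"
    using P fj fl by (simp add: mult_add_distrib_mat_vec[OF P] mult_mat_vec[OF P])
  finally have "col F j \<bullet> (F *\<^sub>v b) = b $ j * p + b $ l * q"
    unfolding p_def q_def using P fj fl by (simp add: scalar_prod_add_distrib[OF fj])
  moreover have "col F j \<bullet> (F *\<^sub>v b) + \<eta> * b $ j = 0"
    using index_reg_gram_mult_vec[OF F b j, of \<eta>] Ab j l \<open>j \<noteq> l\<close> by simp
  ultimately have "b $ j = - (b $ l * q) / (p + \<eta>)"
    using p eta by (simp add: field_simps)
  then have "sgn (b $ j) = - sgn q" using bl p eta by (simp add: sgn_mult sgn_divide)
  moreover have "b $ j = B $$ (j, l)" unfolding b_def using B(1) j l by simp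
  ultimately show ?thesis unfolding q_def P_def B_def by simp
qed

lemma col_mult_symmetric:
  fixes F B :: "'a :: comm_semiring_1 mat"
  assumes F: "F \<in> carrier_mat n k" and B: "B \<in> carrier_mat k k"
    and sym: "transpose_mat B = B" and j: "j < k"
  shows "col (F * B) j =
    B $$ (j, j) \<cdot>\<^sub>v col F j + vec n (\<lambda>i. \<Sum>l\<in>{0..<k} - {j}. B $$ (j, l) * (col F l $ i))"
proof (rule eq_vecI)
  fix i assume "i < dim_vec (B $$ (j, j) \<cdot>\<^sub>v col F j
    + vec n (\<lambda>i. \<Sum>l\<in>{0..<k} - {j}. B $$ (j, l) * (col F l $ i)))"
  then have i: "i < n" using F by simp
  have B_sym: "B $$ (l, j) = B $$ (j, l)" if "l < k" for l
    using B j that arg_cong[OF sym, of "\<lambda>M. M $$ (j, l)"] by simp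
  have "col (F * B) j $ i = (\<Sum>l\<in>{0..<k}. F $$ (i, l) * B $$ (l, j))"
    using F B i j by (simp add: scalar_prod_def)
  also have "\<dots> = (\<Sum>l\<in>{0..<k}. B $$ (j, l) * F $$ (i, l))"
    using B_sym by (intro sum.cong) (auto simp: mult.commute)
  also have "\<dots> = B $$ (j, j) * F $$ (i, j) + (\<Sum>l\<in>{0..<k} - {j}. B $$ (j, l) * F $$ (i, l))"
    using j by (subst sum.remove[of _ j]) auto
  finally show "col (F * B) j $ i = (B $$ (j, j) \<cdot>\<^sub>v col F j
    + vec n (\<lambda>i. \<Sum>l\<in>{0..<k} - {j}. B $$ (j, l) * (col F l $ i))) $ i"
    using F i j by simp
qed (use F B in simp)

theorem mainTheorem8:
  fixes F :: "real mat" and \<eta> :: real and n K j :: nat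
  assumes F: "F \<in> carrier_mat n K" and eta: "\<eta> > 0" and j: "j < K"
  defines "B \<equiv> mat_inv (transpose_mat F * F + \<eta> \<cdot>\<^sub>m 1\<^sub>m K)"
  shows "col (F * B) j =
           B $$ (j, j) \<cdot>\<^sub>v col F j
           + vec n (\<lambda>i. \<Sum>l\<in>{0..<K} - {j}. B $$ (j, l) * (col F l $ i))
         \<and> (\<forall>l<K. l \<noteq> j \<longrightarrow>
           sgn (B $$ (j, l)) = - sgn (col F j \<bullet> (P_proj \<eta> j l F *\<^sub>v col F l)))"
  using col_mult_symmetric[OF F _ _ j] mat_inv_reg_gram[OF F eta]
    sgn_mat_inv_reg_gram_off_diag[OF F eta j]
  unfolding B_def by auto

end
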